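(* Let $L>0$, $a,b\in C^1([-L,L])$ with $a,b>0$, and $G\in C^{1,1}_{\rm loc}(\mathbb{R})$ (not necessarily even), and set $f:=-G'$. Assume there exists $x_0\in[-L,L]$ such that $$(ab)'\le 0\ \text{in }(-L,x_0]\quad\text{and}\quad (ab)'\ge 0\ \text{in }[x_0,L).$$ Let $m>0$. Then every solution $u$ of $$-(a u')'=b f(u)\ \text{ in }(-L,L),\qquad u(L)=-u(-L)=m$$ is increasing, provided either (i) $G\ge G(-m)=G(m)$ in $\mathbb{R}$; or (ii) for some $M\in(0,m]$, $G\ge G(-M)=G(M)$ in $[-M,M]$, $G'\le 0$ in $(-\infty,-M)$, and $G'\ge 0$ in $(M,+\infty)$.
   Context: A solution is a function $u\in H^1((-L,L))$ satisfying the equation weakly (hence classically, $u\in C^2((-L,L))$) together with the boundary conditions. *)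

theory Defs
  imports "HOL-Analysis.Analysis"
begin

definition C11_loc :: "(real \<Rightarrow> real) \<Rightarrow> (real \<Rightarrow> real) \<Rightarrow> bool" where
  "C11_loc G g \<longleftrightarrow> (\<forall>x. (G has_real_derivative g x) (at x)) \<and>
     (\<forall>K. compact K \<longrightarrow> (\<exists>C. C-lipschitz_on K g))"

definition C1_closed :: "real \<Rightarrow> (real \<Rightarrow> real) \<Rightarrow> (real \<Rightarrow> real) \<Rightarrow> bool" where
  "C1_closed L h h' \<longleftrightarrow> (\<forall>x\<in>{-L..L}. (h has_real_derivative h' x) (at x within {-L..L}))
     \<and> continuous_on {-L..L} h'"

end

theory Submission
  imports Defs
begin

text \<open>
  Let c be the minimum of G. Along a solution the energy (a u')^2/2 - ab(G(u) - c) has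
  derivative -(ab)'(G(u) - c), so it increases up to x0 and decreases after x0.
  If u'(x1) = 0, there is a point t between x1 and the boundary, on the side of x1 away
  from x0, where G(u(t)) = c: the boundary itself in case (i), and in case (ii) a point
  with u(t) = \<plusminus>M, which exists by the intermediate value theorem because a critical
  value of u cannot lie outside [-M, M]. The potential term vanishes at t, so the
  energy is nonnegative at t and hence at x1, which forces G(u(x1)) = c. Then
  g(u(x1)) = 0, and uniqueness for the Cauchy problem makes u constant, contradicting
  u(-L) \<noteq> u(L). Hence the continuous function u' has no zero, so it has one sign,
  which is positive because u(-L) < u(L).
\<close>

lemma C1_closed_has_real_derivative_at:
  assumes "C1_closed L h h'" and "x \<in> {-L<..<L}"
  shows "(h has_real_derivative h' x) (at x)"
proof -
  have "(h has_real_derivative h' x) (at x within {-L..L})"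
    using assms unfolding C1_closed_def by auto
  moreover have "x \<in> interior {-L..L}" using assms(2) by simp
  ultimately show ?thesis by (simp only: at_within_interior)
qed

lemma C1_closed_continuous_on:
  assumes "C1_closed L h h'"
  shows "continuous_on {-L..L} h"
  using assms unfolding C1_closed_def by (intro DERIV_continuous_on) auto

lemma global_min_if_monotone_outside:
  assumes G: "\<And>x. (G has_real_derivative g x) (at x)"
    and inside: "\<forall>s\<in>{-M..M}. G M \<le> G s" and sym: "G (-M) = G M"
    and left: "\<forall>s. s < -M \<longrightarrow> g s \<le> 0" and right: "\<forall>s. s > M \<longrightarrow> 0 \<le> g s"
  shows "G M \<le> G s"
proof -
  have cont: "continuous_on S G" for S
    by (intro continuous_at_imp_continuous_on ballI DERIV_isCont[OF G])
  consider "s \<in> {-M..M}" | "M < s" | "s < -M" by force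
  then show ?thesis
  proof cases
    case 2
    show ?thesis
      by (rule DERIV_nonneg_imp_increasing_open[OF less_imp_le[OF 2]]) (use G right cont in auto)
  next
    case 3
    have "G (-M) \<le> G s"
      by (rule DERIV_nonpos_imp_decreasing_open[OF less_imp_le[OF 3]]) (use G left cont in auto)
    then show ?thesis using sym by simp
  qed (use inside in auto)
qed

lemma symmetric_global_min_level:
  assumes G: "\<And>x. (G has_real_derivative g x) (at x)" and "0 < m"
    and "((\<forall>s. G s \<ge> G m) \<and> G (-m) = G m) \<or>
       (\<exists>M. 0 < M \<and> M \<le> m \<and> G (-M) = G M \<and> (\<forall>s\<in>{-M..M}. G s \<ge> G M)
            \<and> (\<forall>s. s < -M \<longrightarrow> g s \<le> 0) \<and> (\<forall>s. s > M \<longrightarrow> g s \<ge> 0))"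
  obtains M where "0 < M" "M \<le> m" "\<forall>s. G M \<le> G s" "G (-M) = G M"
    and "M = m \<or> (\<forall>s. s < -M \<longrightarrow> g s \<le> 0) \<and> (\<forall>s. s > M \<longrightarrow> 0 \<le> g s)"
proof (cases "(\<forall>s. G s \<ge> G m) \<and> G (-m) = G m")
  case True
  then show ?thesis using that[of m] \<open>0 < m\<close> by auto
next
  case False
  then obtain M where "0 < M" "M \<le> m" "G (-M) = G M" "\<forall>s\<in>{-M..M}. G M \<le> G s"
    and sign: "\<forall>s. s < -M \<longrightarrow> g s \<le> 0" "\<forall>s. s > M \<longrightarrow> 0 \<le> g s"
    using assms(3) by auto
  moreover have "\<forall>s. G M \<le> G s"
    using global_min_if_monotone_outside[OF G] calculation sign by blast
  ultimately show ?thesis using that[of M] by blast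
qed

lemma DERIV_le_linear_imp_exp_bound:
  fixes E E' :: "real \<Rightarrow> real"
  assumes "x \<le> y"
    and deriv: "\<And>t. t \<in> {x..y} \<Longrightarrow> (E has_real_derivative E' t) (at t)"
    and le: "\<And>t. t \<in> {x..y} \<Longrightarrow> E' t \<le> C * E t"
  shows "E y \<le> E x * exp (C * (y - x))"
proof -
  define F where "F t = E t * exp (- C * t)" for t
  have dF: "(F has_real_derivative (E' t - C * E t) * exp (- C * t)) (at t)"
    if "t \<in> {x..y}" for t
    unfolding F_def using deriv[OF that]
    by (auto intro!: derivative_eq_intros simp: algebra_simps)
  have "F y \<le> F x"
  proof (rule DERIV_nonpos_imp_decreasing_open[OF \<open>x \<le> y\<close>])
    fix t assume "x < t" "t < y"
    then have "t \<in> {x..y}" by simp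
    then have "(E' t - C * E t) * exp (- C * t) \<le> 0"
      using le by (simp add: mult_nonpos_nonneg)
    then show "\<exists>D. (F has_real_derivative D) (at t) \<and> D \<le> 0"
      using dF[OF \<open>t \<in> {x..y}\<close>] by blast
  qed (intro continuous_at_imp_continuous_on ballI DERIV_isCont[OF dF], auto)
  then have "E y * exp (- C * y) * exp (C * y) \<le> E x * exp (- C * x) * exp (C * y)"
    unfolding F_def by (simp add: mult_right_mono)
  then show ?thesis by (simp add: mult.assoc flip: exp_add) (simp add: algebra_simps)
qed

lemma DERIV_abs_le_linear_imp_zero:
  fixes E E' :: "real \<Rightarrow> real"
  assumes deriv: "\<And>t. t \<in> {l<..<r} \<Longrightarrow> (E has_real_derivative E' t) (at t)"
    and le: "\<And>t. t \<in> {l<..<r} \<Longrightarrow> \<bar>E' t\<bar> \<le> C * E t"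
    and nonneg: "\<And>t. t \<in> {l<..<r} \<Longrightarrow> 0 \<le> E t"
    and x: "x \<in> {l<..<r}" and zero: "E x = 0" and y: "y \<in> {l<..<r}"
  shows "E y = 0"
proof -
  have "E y \<le> 0"
  proof (cases "x \<le> y")
    case True
    have "E y \<le> E x * exp (C * (y - x))"
    proof (rule DERIV_le_linear_imp_exp_bound[OF True])
      fix t assume "t \<in> {x..y}"
      then have "t \<in> {l<..<r}" using x y by auto
      then show "(E has_real_derivative E' t) (at t)" "E' t \<le> C * E t"
        using deriv le[of t] by auto
    qed
    then show ?thesis using zero by simp
  next
    case False
    have "E (- (- y)) \<le> E (- (- x)) * exp (C * (- y - - x))"
    proof (rule DERIV_le_linear_imp_exp_bound[where E' = "\<lambda>t. - E' (- t)"])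
      fix t assume t: "t \<in> {- x..- y}"
      then have "- t \<in> {l<..<r}" using x y by auto
      then show "((\<lambda>t. E (- t)) has_real_derivative - E' (- t)) (at t)"
        using deriv DERIV_mirror[where f=E and x=t and y="E' (- t)"] by auto
      show "- E' (- t) \<le> C * E (- t)" using le[OF \<open>- t \<in> {l<..<r}\<close>] by linarith
    qed (use False in auto)
    then show ?thesis using zero by simp
  qed
  then show ?thesis using nonneg[OF y] by simp
qed

lemma abs_cross_terms_le_sum_squares:
  fixes v w a b gv A B K :: real
  assumes "0 < A" "A \<le> a" "0 < b" "b \<le> B" "0 \<le> K" "\<bar>gv\<bar> \<le> K * \<bar>v\<bar>"
  shows "\<bar>2 * (v * (w / a)) + 2 * (w * (b * gv))\<bar> \<le> (1 / A + B * K) * (v\<^sup>2 + w\<^sup>2)"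
proof -
  have amgm: "2 * \<bar>v\<bar> * \<bar>w\<bar> \<le> v\<^sup>2 + w\<^sup>2"
    using sum_squares_bound[of "\<bar>v\<bar>" "\<bar>w\<bar>"] by simp
  have "\<bar>2 * (v * (w / a))\<bar> = 2 * \<bar>v\<bar> * \<bar>w\<bar> / a"
    using assms by (simp add: abs_mult)
  also have "\<dots> \<le> (v\<^sup>2 + w\<^sup>2) / A"
    using amgm assms by (intro frac_le) auto
  finally have first: "\<bar>2 * (v * (w / a))\<bar> \<le> (v\<^sup>2 + w\<^sup>2) / A" .
  have "\<bar>2 * (w * (b * gv))\<bar> = b * (2 * \<bar>w\<bar> * \<bar>gv\<bar>)"
    using assms by (simp add: abs_mult)
  also have "\<dots> \<le> B * (K * (2 * \<bar>v\<bar> * \<bar>w\<bar>))"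
  proof (rule mult_mono)
    have "2 * \<bar>w\<bar> * \<bar>gv\<bar> \<le> 2 * \<bar>w\<bar> * (K * \<bar>v\<bar>)"
      using assms by (intro mult_left_mono) auto
    then show "2 * \<bar>w\<bar> * \<bar>gv\<bar> \<le> K * (2 * \<bar>v\<bar> * \<bar>w\<bar>)"
      by (simp add: algebra_simps)
  qed (use assms in auto)
  also have "\<dots> \<le> B * K * (v\<^sup>2 + w\<^sup>2)"
    using amgm assms by (simp add: mult.assoc mult_left_mono)
  finally have second: "\<bar>2 * (w * (b * gv))\<bar> \<le> B * K * (v\<^sup>2 + w\<^sup>2)" .
  show ?thesis
    using abs_triangle_ineq[of "2 * (v * (w / a))" "2 * (w * (b * gv))"] first second
    by (simp add: distrib_right)
qed

lemma DERIV_nonzero_imp_strict_mono_on: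
  fixes u u' :: "real \<Rightarrow> real"
  assumes "continuous_on {l..r} u" "u l < u r"
    and deriv: "\<And>x. x \<in> {l<..<r} \<Longrightarrow> (u has_real_derivative u' x) (at x)"
    and cont: "continuous_on {l<..<r} u'"
    and nonzero: "\<And>x. x \<in> {l<..<r} \<Longrightarrow> u' x \<noteq> 0"
  shows "strict_mono_on {l..r} u"
proof -
  have interval: "is_interval (u' ` {l<..<r})"
    by (simp add: is_interval_connected_1 connected_continuous_image[OF cont])
  have pos: "0 < u' x" if "x \<in> {l<..<r}" for x
  proof (rule ccontr)
    assume "\<not> 0 < u' x"
    then have neg: "u' x < 0" using nonzero[OF that] by simp
    have "u' y < 0" if "y \<in> {l<..<r}" for y
    proof (rule ccontr)
      assume "\<not> u' y < 0"
      then have "0 \<in> u' ` {l<..<r}"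
        using interval neg \<open>x \<in> {l<..<r}\<close> that unfolding is_interval_1
        by (metis image_eqI linorder_not_less less_imp_le)
      then show False using nonzero by auto
    qed
    then have "u r < u l"
      using \<open>x \<in> {l<..<r}\<close> deriv
      by (intro DERIV_neg_imp_decreasing_open[OF _ _ assms(1)]) auto
    then show False using assms(2) by simp
  qed
  show ?thesis
  proof (rule strict_mono_onI)
    fix x y assume xy: "x \<in> {l..r}" "y \<in> {l..r}" "x < y"
    show "u x < u y"
    proof (rule DERIV_pos_imp_increasing_open[OF \<open>x < y\<close>])
      fix z assume "x < z" "z < y"
      then have "z \<in> {l<..<r}" using xy by auto
      then show "\<exists>D. (u has_real_derivative D) (at z) \<and> 0 < D" using pos deriv by blast
    qed (use xy in \<open>auto intro: continuous_on_subset[OF assms(1)]\<close>)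
  qed
qed

text \<open>
  Where u > M the flux w is nondecreasing, so going backwards from a zero of w it stays
  nonpositive: u decreases there and cannot exceed at x the bound M it satisfies at l.
\<close>

lemma critical_value_le_threshold:
  fixes u u' w w' :: "real \<Rightarrow> real"
  assumes "l \<le> x" and u_cont: "continuous_on {l..x} u" and "u l \<le> M"
    and u_deriv: "\<And>z. z \<in> {l<..<x} \<Longrightarrow> (u has_real_derivative u' z) (at z)"
    and sign: "\<And>z. z \<in> {l<..<x} \<Longrightarrow> w z \<le> 0 \<Longrightarrow> u' z \<le> 0"
    and w_deriv: "\<And>z. z \<in> {l<..x} \<Longrightarrow> (w has_real_derivative w' z) (at z)"
    and w'_nonneg: "\<And>z. z \<in> {l<..x} \<Longrightarrow> M < u z \<Longrightarrow> 0 \<le> w' z"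
    and "w x = 0"
  shows "u x \<le> M"
proof (rule ccontr)
  assume "\<not> u x \<le> M"
  define S where "S = {l..x} \<inter> u -` {..M}"
  have "closed S" unfolding S_def by (rule continuous_closed_preimage[OF u_cont]) auto
  moreover have "l \<in> S" "bdd_above S" using assms unfolding S_def by auto
  ultimately have "Sup S \<in> S" using closed_contains_Sup by blast
  define t where "t = Sup S"
  have t: "l \<le> t" "t \<le> x" "u t \<le> M" using \<open>Sup S \<in> S\<close> unfolding S_def t_def by auto
  have above: "M < u s" if "t < s" "s \<le> x" for s
    using cSup_upper[of s S] \<open>bdd_above S\<close> that t unfolding S_def t_def by force
  have w_nonpos: "w s \<le> 0" if "t < s" "s \<le> x" for s
  proof -
    have "w s \<le> w x"
    proof (rule DERIV_nonneg_imp_increasing_open[OF \<open>s \<le> x\<close>])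
      fix z assume "s < z" "z < x"
      then have "z \<in> {l<..x}" "M < u z" using that t above by auto
      then show "\<exists>D. (w has_real_derivative D) (at z) \<and> 0 \<le> D"
        using w_deriv w'_nonneg by blast
    next
      show "continuous_on {s..x} w"
        using that t by (intro continuous_at_imp_continuous_on ballI DERIV_isCont[OF w_deriv]) auto
    qed
    then show ?thesis using \<open>w x = 0\<close> by simp
  qed
  have "u x \<le> u t"
  proof (rule DERIV_nonpos_imp_decreasing_open[OF \<open>t \<le> x\<close>])
    fix z assume "t < z" "z < x"
    then have "z \<in> {l<..<x}" "w z \<le> 0" using t w_nonpos by auto
    then show "\<exists>D. (u has_real_derivative D) (at z) \<and> D \<le> 0" using u_deriv sign by blast
  qed (use t in \<open>auto intro: continuous_on_subset[OF u_cont]\<close>)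
  then show False using t \<open>\<not> u x \<le> M\<close> by simp
qed

locale sturm_liouville_solution =
  fixes L :: real and a a' b b' G g u u' :: "real \<Rightarrow> real"
  assumes L_pos: "L > 0"
    and a_C1: "C1_closed L a a'" and b_C1: "C1_closed L b b'"
    and a_pos: "\<forall>x\<in>{-L..L}. a x > 0" and b_pos: "\<forall>x\<in>{-L..L}. b x > 0"
    and G_reg: "C11_loc G g"
    and u_cont: "continuous_on {-L..L} u"
    and u_deriv: "\<forall>x\<in>{-L<..<L}. (u has_real_derivative u' x) (at x)"
    and u_eq: "\<forall>x\<in>{-L<..<L}.
                 ((\<lambda>t. a t * u' t) has_real_derivative (- (b x * (- g (u x))))) (at x)"
begin

definition flux :: "real \<Rightarrow> real" where
  "flux t = a t * u' t"

definition energy :: "real \<Rightarrow> real \<Rightarrow> real" where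
  "energy c t = (flux t)\<^sup>2 / 2 - a t * b t * (G (u t) - c)"

lemma G_deriv: "(G has_real_derivative g s) (at s)"
  using G_reg unfolding C11_loc_def by blast

lemma continuous_on_G: "continuous_on S G"
  by (intro continuous_at_imp_continuous_on ballI DERIV_isCont[OF G_deriv])

lemma flux_deriv:
  assumes "x \<in> {-L<..<L}"
  shows "(flux has_real_derivative b x * g (u x)) (at x)"
  using u_eq assms unfolding flux_def[abs_def] by simp

lemma u'_eq_flux:
  assumes "x \<in> {-L<..<L}"
  shows "u' x = flux x / a x"
proof -
  have "a x > 0" using a_pos assms by auto
  then show ?thesis by (simp add: flux_def)
qed

lemma continuous_on_u': "continuous_on {-L<..<L} u'"
proof -
  have "continuous_on {-L<..<L} flux"
    by (intro continuous_at_imp_continuous_on ballI DERIV_isCont[OF flux_deriv])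
  moreover have "continuous_on {-L<..<L} a"
    by (rule continuous_on_subset[OF C1_closed_continuous_on[OF a_C1]]) auto
  moreover have "\<forall>x\<in>{-L<..<L}. a x \<noteq> 0"
    using a_pos by (metis greaterThanLessThan_iff atLeastAtMost_iff less_imp_le less_irrefl)
  ultimately have "continuous_on {-L<..<L} (\<lambda>x. flux x / a x)"
    by (rule continuous_on_divide)
  then show ?thesis by (rule continuous_on_eq) (simp add: u'_eq_flux)
qed

lemma energy_deriv:
  assumes x: "x \<in> {-L<..<L}"
  shows "(energy c has_real_derivative - ((a' x * b x + a x * b' x) * (G (u x) - c))) (at x)"
proof -
  have "(energy c has_real_derivative
      2 * flux x * (b x * g (u x)) / 2
        - ((a' x * b x + a x * b' x) * (G (u x) - c) + a x * b x * (g (u x) * u' x))) (at x)"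
    unfolding energy_def[abs_def]
    using flux_deriv[OF x] C1_closed_has_real_derivative_at[OF a_C1 x]
      C1_closed_has_real_derivative_at[OF b_C1 x] u_deriv x
    by (auto intro!: derivative_eq_intros DERIV_chain2[OF G_deriv] simp: algebra_simps)
  then show ?thesis by (simp add: flux_def algebra_simps)
qed

lemma continuous_on_weighted_potential:
  "continuous_on {-L..L} (\<lambda>t. a t * b t * (G (u t) - c))"
  by (intro continuous_intros C1_closed_continuous_on[OF a_C1] C1_closed_continuous_on[OF b_C1]
      continuous_on_compose2[OF continuous_on_G u_cont]) auto

lemma weighted_potential_le_energy: "- (a t * b t * (G (u t) - c)) \<le> energy c t"
  by (simp add: energy_def)

text \<open>
  Uniqueness for the Cauchy problem at an equilibrium: since g is Lipschitz on the range
  of u, the quantity (u - u x1)^2 + flux^2 satisfies a Gronwall inequality.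
\<close>

lemma critical_equilibrium_imp_constant:
  assumes x1: "x1 \<in> {-L<..<L}" and crit: "u' x1 = 0" and equil: "g (u x1) = 0"
    and y: "y \<in> {-L..L}"
  shows "u y = u x1"
proof -
  obtain xa where xa: "xa \<in> {-L..L}" "\<forall>x\<in>{-L..L}. a xa \<le> a x"
    using continuous_attains_inf[OF compact_Icc _ C1_closed_continuous_on[OF a_C1]] L_pos by auto
  obtain xb where xb: "\<forall>x\<in>{-L..L}. b x \<le> b xb"
    using continuous_attains_sup[OF compact_Icc _ C1_closed_continuous_on[OF b_C1]] L_pos by auto
  obtain K where K: "K-lipschitz_on (u ` {-L..L}) g"
    using G_reg compact_continuous_image[OF u_cont compact_Icc] unfolding C11_loc_def by blast
  define C where "C = 1 / a xa + b xb * K"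
  define E where "E t = (u t - u x1)\<^sup>2 + (flux t)\<^sup>2" for t
  define E' where "E' t = 2 * ((u t - u x1) * u' t) + 2 * (flux t * (b t * g (u t)))" for t
  have deriv: "(E has_real_derivative E' t) (at t)" if t: "t \<in> {-L<..<L}" for t
  proof -
    have "(E has_real_derivative 2 * (u t - u x1) * u' t + 2 * flux t * (b t * g (u t))) (at t)"
      unfolding E_def[abs_def] using u_deriv flux_deriv[OF t] t
      by (auto intro!: derivative_eq_intros)
    then show ?thesis by (simp add: E'_def algebra_simps)
  qed
  have bound: "\<bar>E' t\<bar> \<le> C * E t" if t: "t \<in> {-L<..<L}" for t
  proof -
    have "dist (g (u t)) (g (u x1)) \<le> K * dist (u t) (u x1)"
      by (rule lipschitz_onD[OF K]) (use t x1 in auto)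
    then have "\<bar>g (u t)\<bar> \<le> K * \<bar>u t - u x1\<bar>" using equil by (simp add: dist_real_def)
    moreover have "0 < a xa" "a xa \<le> a t" "0 < b t" "b t \<le> b xb"
      using xa xb a_pos b_pos t by auto
    ultimately show ?thesis
      unfolding E'_def E_def C_def u'_eq_flux[OF t]
      by (intro abs_cross_terms_le_sum_squares lipschitz_on_nonneg[OF K])
  qed
  have const: "u z = u x1" if z: "z \<in> {-L<..<L}" for z
  proof -
    have "E z = 0"
      by (rule DERIV_abs_le_linear_imp_zero[OF deriv bound _ x1 _ z]) (auto simp: E_def flux_def crit)
    then have "(u z - u x1)\<^sup>2 + (flux z)\<^sup>2 = 0" by (simp only: E_def)
    then show ?thesis unfolding sum_power2_eq_zero_iff by simp
  qed
  show ?thesis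
  proof (rule continuous_constant_on_closure[of "{-L<..<L}" u])
    show "continuous_on (closure {-L<..<L}) u" using u_cont L_pos by simp
    show "y \<in> closure {-L<..<L}" using y L_pos by simp
  qed (rule const)
qed

lemma energy_nonneg_left:
  assumes G_ge: "\<forall>s. c \<le> G s"
    and ab_left: "\<forall>x\<in>{-L<..x0}. a' x * b x + a x * b' x \<le> 0"
    and x: "x \<in> {-L<..<L}" "x \<le> x0"
    and t: "t \<in> {-L..x}" "G (u t) = c"
  shows "0 \<le> energy c x"
proof -
  have mono: "energy c z \<le> energy c x" if z: "z \<in> {-L<..x}" for z
  proof (rule DERIV_nonneg_imp_increasing_open[of z x "energy c"])
    fix y assume "z < y" "y < x"
    then have y: "y \<in> {-L<..<L}" and "a' y * b y + a y * b' y \<le> 0"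
      using z x ab_left by auto
    then have "0 \<le> - ((a' y * b y + a y * b' y) * (G (u y) - c))"
      using G_ge by (simp add: mult_nonpos_nonneg)
    then show "\<exists>D. (energy c has_real_derivative D) (at y) \<and> 0 \<le> D"
      using energy_deriv[OF y] by blast
  next
    show "continuous_on {z..x} (energy c)"
      using z x by (intro continuous_at_imp_continuous_on ballI DERIV_isCont[OF energy_deriv]) auto
  qed (use z in auto)
  have "- (a t * b t * (G (u t) - c)) \<le> energy c x"
  proof (rule continuous_le_on_closure[where S = "{-L<..x}" and x = t
        and f = "\<lambda>t. - (a t * b t * (G (u t) - c))"])
    show "continuous_on (closure {-L<..x}) (\<lambda>t. - (a t * b t * (G (u t) - c)))"
      using x by (intro continuous_intros continuous_on_subset[OF continuous_on_weighted_potential]) auto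
    show "t \<in> closure {-L<..x}" using t x by simp
  next
    fix z assume "z \<in> {-L<..x}"
    then show "- (a z * b z * (G (u z) - c)) \<le> energy c x"
      by (rule order_trans[OF weighted_potential_le_energy mono])
  qed
  then show ?thesis using t by simp
qed

lemma energy_nonneg_right:
  assumes G_ge: "\<forall>s. c \<le> G s"
    and ab_right: "\<forall>x\<in>{x0..<L}. a' x * b x + a x * b' x \<ge> 0"
    and x: "x \<in> {-L<..<L}" "x0 \<le> x"
    and t: "t \<in> {x..L}" "G (u t) = c"
  shows "0 \<le> energy c x"
proof -
  have mono: "energy c z \<le> energy c x" if z: "z \<in> {x..<L}" for z
  proof (rule DERIV_nonpos_imp_decreasing_open[of x z "energy c"])
    fix y assume "x < y" "y < z"
    then have y: "y \<in> {-L<..<L}" and "0 \<le> a' y * b y + a y * b' y"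
      using z x ab_right by auto
    then have "- ((a' y * b y + a y * b' y) * (G (u y) - c)) \<le> 0"
      using G_ge by simp
    then show "\<exists>D. (energy c has_real_derivative D) (at y) \<and> D \<le> 0"
      using energy_deriv[OF y] by blast
  next
    show "continuous_on {x..z} (energy c)"
      using z x by (intro continuous_at_imp_continuous_on ballI DERIV_isCont[OF energy_deriv]) auto
  qed (use z in auto)
  have "- (a t * b t * (G (u t) - c)) \<le> energy c x"
  proof (rule continuous_le_on_closure[where S = "{x..<L}" and x = t
        and f = "\<lambda>t. - (a t * b t * (G (u t) - c))"])
    show "continuous_on (closure {x..<L}) (\<lambda>t. - (a t * b t * (G (u t) - c)))"
      using x by (intro continuous_intros continuous_on_subset[OF continuous_on_weighted_potential]) auto
    show "t \<in> closure {x..<L}" using t x by simp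
  next
    fix z assume "z \<in> {x..<L}"
    then show "- (a z * b z * (G (u z) - c)) \<le> energy c x"
      by (rule order_trans[OF weighted_potential_le_energy mono])
  qed
  then show ?thesis using t by simp
qed

lemma critical_point_imp_boundary_values_eq:
  assumes G_ge: "\<forall>s. c \<le> G s"
    and ab_left: "\<forall>x\<in>{-L<..x0}. a' x * b x + a x * b' x \<le> 0"
    and ab_right: "\<forall>x\<in>{x0..<L}. a' x * b x + a x * b' x \<ge> 0"
    and x1: "x1 \<in> {-L<..<L}" and crit: "u' x1 = 0"
    and level_left: "\<exists>t\<in>{-L..x1}. G (u t) = c" and level_right: "\<exists>t\<in>{x1..L}. G (u t) = c"
  shows "u (-L) = u L"
proof -
  have "0 \<le> energy c x1"
    using energy_nonneg_left[OF G_ge ab_left x1] energy_nonneg_right[OF G_ge ab_right x1]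
      level_left level_right by (cases "x1 \<le> x0") auto
  moreover have "energy c x1 = - (a x1 * b x1 * (G (u x1) - c))"
    by (simp add: energy_def flux_def crit)
  moreover have "0 < a x1 * b x1" using a_pos b_pos x1 by auto
  ultimately have "G (u x1) - c \<le> 0"
    using mult_pos_pos[of "a x1 * b x1" "G (u x1) - c"] by linarith
  then have "g (u x1) = 0"
    using G_ge by (intro DERIV_local_min[OF G_deriv, of 1]) (auto intro: order_trans[of _ c])
  then show ?thesis
    using critical_equilibrium_imp_constant[OF x1 crit] L_pos by simp
qed

lemma critical_level_right:
  assumes g_right: "\<forall>s. s > M \<longrightarrow> 0 \<le> g s" and ends: "u (-L) \<le> M" "M \<le> u L"
    and x1: "x1 \<in> {-L<..<L}" and crit: "u' x1 = 0"
  shows "\<exists>t\<in>{x1..L}. u t = M"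
proof -
  have "u x1 \<le> M"
  proof (rule critical_value_le_threshold[where l = "-L" and x = x1 and u = u and w = flux
        and w' = "\<lambda>z. b z * g (u z)"])
    fix z assume z: "z \<in> {-L<..<x1}"
    then show "(u has_real_derivative u' z) (at z)" using u_deriv x1 by auto
    show "flux z \<le> 0 \<Longrightarrow> u' z \<le> 0"
      using z x1 a_pos u'_eq_flux[of z] by (auto intro: divide_nonpos_pos)
  next
    fix z assume z: "z \<in> {-L<..x1}"
    then show "(flux has_real_derivative b z * g (u z)) (at z)" using flux_deriv x1 by auto
    have "0 < b z" using z x1 b_pos by auto
    then show "M < u z \<Longrightarrow> 0 \<le> b z * g (u z)" using g_right by simp
  qed (use x1 ends crit in \<open>auto intro: continuous_on_subset[OF u_cont] simp: flux_def\<close>)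
  then show ?thesis
    using IVT'[of u x1 M L] ends x1 continuous_on_subset[OF u_cont, of "{x1..L}"] by auto
qed

text \<open>The mirror image of the previous lemma under x \<mapsto> -x, u \<mapsto> -u.\<close>

lemma critical_level_left:
  assumes g_left: "\<forall>s. s < -M \<longrightarrow> g s \<le> 0" and ends: "u (-L) \<le> -M" "-M \<le> u L"
    and x1: "x1 \<in> {-L<..<L}" and crit: "u' x1 = 0"
  shows "\<exists>t\<in>{-L..x1}. u t = -M"
proof -
  have "- u (- (- x1)) \<le> M"
  proof (rule critical_value_le_threshold[where l = "-L" and x = "- x1" and u = "\<lambda>z. - u (- z)"
        and u' = "\<lambda>z. u' (- z)" and w = "\<lambda>z. flux (- z)"
        and w' = "\<lambda>z. - (b (- z) * g (u (- z)))"])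
    fix z assume z: "z \<in> {-L<..<- x1}"
    then have "((\<lambda>z. u (- z)) has_real_derivative - u' (- z)) (at z)"
      using u_deriv x1 DERIV_mirror[where f = u and x = z and y = "u' (- z)"] by auto
    then show "((\<lambda>z. - u (- z)) has_real_derivative u' (- z)) (at z)"
      using DERIV_minus by fastforce
    show "flux (- z) \<le> 0 \<Longrightarrow> u' (- z) \<le> 0"
      using z x1 a_pos u'_eq_flux[of "- z"] by (auto intro: divide_nonpos_pos)
  next
    fix z assume "z \<in> {-L<..- x1}"
    then have z: "- z \<in> {-L<..<L}" using x1 by auto
    then show "((\<lambda>z. flux (- z)) has_real_derivative - (b (- z) * g (u (- z)))) (at z)"
      using flux_deriv DERIV_mirror[where f = flux and x = z and y = "b (- z) * g (u (- z))"] by auto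
    have "0 < b (- z)" using z b_pos by auto
    then show "M < - u (- z) \<Longrightarrow> 0 \<le> - (b (- z) * g (u (- z)))"
      using g_left by (simp add: mult_nonneg_nonpos)
  qed (use x1 ends crit in \<open>auto intro!: continuous_intros continuous_on_compose2[OF u_cont]
        simp: flux_def\<close>)
  then show ?thesis
    using IVT'[of u "-L" "-M" x1] ends x1 continuous_on_subset[OF u_cont, of "{-L..x1}"] by auto
qed

end

theorem theorem1p9:
  fixes L m x0 :: real and a a' b b' G g u u' :: "real \<Rightarrow> real"
  assumes L: "L > 0"
    and a_C1: "C1_closed L a a'" and b_C1: "C1_closed L b b'"
    and a_pos: "\<forall>x\<in>{-L..L}. a x > 0" and b_pos: "\<forall>x\<in>{-L..L}. b x > 0"
    and G_reg: "C11_loc G g"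
    and x0: "x0 \<in> {-L..L}"
    and ab_left: "\<forall>x\<in>{-L<..x0}. a' x * b x + a x * b' x \<le> 0"
    and ab_right: "\<forall>x\<in>{x0..<L}. a' x * b x + a x * b' x \<ge> 0"
    and m: "m > 0"
    and u_cont: "continuous_on {-L..L} u"
    and u_deriv: "\<forall>x\<in>{-L<..<L}. (u has_real_derivative u' x) (at x)"
    and u_eq: "\<forall>x\<in>{-L<..<L}.
                 ((\<lambda>t. a t * u' t) has_real_derivative (- (b x * (- g (u x))))) (at x)"
    and bc: "u L = m" "u (-L) = - m"
    and G_cond: "((\<forall>s. G s \<ge> G m) \<and> G (-m) = G m) \<or>
       (\<exists>M. 0 < M \<and> M \<le> m \<and> G (-M) = G M \<and> (\<forall>s\<in>{-M..M}. G s \<ge> G M)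
            \<and> (\<forall>s. s < -M \<longrightarrow> g s \<le> 0) \<and> (\<forall>s. s > M \<longrightarrow> g s \<ge> 0))"
  shows "strict_mono_on {-L..L} u"
proof -
  interpret sturm_liouville_solution L a a' b b' G g u u'
    using L a_C1 b_C1 a_pos b_pos G_reg u_cont u_deriv u_eq by unfold_locales
  obtain M where M: "0 < M" "M \<le> m" "\<forall>s. G M \<le> G s" "G (-M) = G M"
    and alt: "M = m \<or> (\<forall>s. s < -M \<longrightarrow> g s \<le> 0) \<and> (\<forall>s. s > M \<longrightarrow> 0 \<le> g s)"
    using symmetric_global_min_level[OF G_deriv m G_cond] by blast
  have "u' x \<noteq> 0" if x: "x \<in> {-L<..<L}" for x
  proof
    assume crit: "u' x = 0"
    have "\<exists>t\<in>{-L..x}. u t = -M" "\<exists>t\<in>{x..L}. u t = M"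
      using alt critical_level_left[OF _ _ _ x crit] critical_level_right[OF _ _ _ x crit] bc M x
      by (auto intro: bexI[of _ "-L"] bexI[of _ L])
    then obtain tl tr where tl: "tl \<in> {-L..x}" "u tl = -M" and tr: "tr \<in> {x..L}" "u tr = M"
      by blast
    have "u (-L) = u L"
      by (intro critical_point_imp_boundary_values_eq[OF M(3) ab_left ab_right x crit]
          bexI[OF _ tl(1)] bexI[OF _ tr(1)]) (simp_all add: tl tr M(4))
    then show False using bc m by simp
  qed
  then show ?thesis
    using DERIV_nonzero_imp_strict_mono_on[OF u_cont _ _ continuous_on_u'] bc m u_deriv by auto
qed

end
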